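(* Let $V=\mathbb{R}^{16}$, with coordinates indexed by $(a,b,x,y)\in\{0,1\}^4$, and let $G$ be the relabeling group of the $(2,2,2)$ Bell scenario acting on $V$ (defined in the context). Define the subspaces $V_{\mathrm{NO}_1}=\operatorname{span}\{\vec Q_{++++}\}$, $V_{\mathrm{NO}_2}=\operatorname{span}\{\vec Q_{+++-},\vec Q_{++-+}\}$, $V_{\mathrm{NO}_3}=\operatorname{span}\{\vec Q_{++--}\}$, $V_{\mathrm{marg}}=\operatorname{span}\{\vec Q_{-+++},\vec Q_{-+-+},\vec Q_{+-++},\vec Q_{+-+-}\}$, $V_{\mathrm{corr}}=\operatorname{span}\{\vec Q_{--++},\vec Q_{--+-},\vec Q_{---+},\vec Q_{----}\}$, $V_{\mathrm{SI}}=\operatorname{span}\{\vec Q_{+--+},\vec Q_{+---},\vec Q_{-++-},\vec Q_{-+--}\}$. Then $V=V_{\mathrm{NO}_1}\oplus V_{\mathrm{NO}_2}\oplus V_{\mathrm{NO}_3}\oplus V_{\mathrm{marg}}\oplus V_{\mathrm{corr}}\oplus V_{\mathrm{SI}}$, these six subspaces are mutually orthogonal, each is $G$-invariant and is an irreducible representation of $G$, and the six representations are pairwise nonequivalent. Consequently this is the unique decomposition of $V$ into $G$-irreducible subspaces (the finest $G$-invariant decomposition), and for every $g\in G$ and $\vec P\in V$ the component of $g\vec P$ in each of these subspaces is $g$ applied to the component of $\vec P$ in that subspace.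
   Context: For $i,j,k,l\in\{+1,-1\}$ (written $\pm$), $\vec Q_{ijkl}\in V$ is the vector with entries $Q_{ijkl}(ab|xy)=i^a j^b k^x l^y$. The relabeling group $G$ is the group of permutations of the index set $\{0,1\}^4$ (acting on $V$ by permuting coordinates, $(g\vec P)(g(a,b,x,y))=P(a,b,x,y)$) generated by: flipping Alice's outcome $a\mapsto 1-a$ only for indices with a given value of $x$ (for each $x\in\{0,1\}$); flipping Bob's outcome $b\mapsto 1-b$ only for indices with a given value of $y$; flipping Alice's setting $x\mapsto 1-x$; flipping Bob's setting $y\mapsto 1-y$; and exchanging the parties $(a,b,x,y)\mapsto(b,a,y,x)$. It is the wreath product $(\mathfrak S_2\wr\mathfrak S_2)\wr\mathfrak S_2$, of order 128. *)

theory Defs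
  imports "HOL-Analysis.Analysis"
begin

text \<open>Index set \<open>{0,1}^4\<close>: a coordinate \<open>(a,b,x,y)\<close> is encoded with \<open>False = 0\<close>, \<open>True = 1\<close>.\<close>
type_synonym idx = "bool \<times> bool \<times> bool \<times> bool"
type_synonym vec = "real ^ idx"

definition Q :: "real \<Rightarrow> real \<Rightarrow> real \<Rightarrow> real \<Rightarrow> vec" where
  "Q i j k l = (\<chi> t. case t of (a, b, x, y) \<Rightarrow> i ^ (of_bool a) * j ^ (of_bool b) * k ^ (of_bool x) * l ^ (of_bool y))"

definition flipA :: "bool \<Rightarrow> idx \<Rightarrow> idx" where
  "flipA x0 = (\<lambda>(a, b, x, y). (if x = x0 then \<not> a else a, b, x, y))"
definition flipB :: "bool \<Rightarrow> idx \<Rightarrow> idx" where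
  "flipB y0 = (\<lambda>(a, b, x, y). (a, if y = y0 then \<not> b else b, x, y))"
definition flipX :: "idx \<Rightarrow> idx" where
  "flipX = (\<lambda>(a, b, x, y). (a, b, \<not> x, y))"
definition flipY :: "idx \<Rightarrow> idx" where
  "flipY = (\<lambda>(a, b, x, y). (a, b, x, \<not> y))"
definition swapAB :: "idx \<Rightarrow> idx" where
  "swapAB = (\<lambda>(a, b, x, y). (b, a, y, x))"

definition generators :: "(idx \<Rightarrow> idx) set" where
  "generators = {flipA False, flipA True, flipB False, flipB True, flipX, flipY, swapAB}"

text \<open>The group generated (under composition) by the generators; since the index set is
  finite and the generators are permutations, closure under composition gives the group.\<close>
inductive_set relabel :: "(idx \<Rightarrow> idx) set" where
  relabel_id: "id \<in> relabel"
| relabel_step: "g \<in> relabel \<Longrightarrow> s \<in> generators \<Longrightarrow> s \<circ> g \<in> relabel"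

definition act :: "(idx \<Rightarrow> idx) \<Rightarrow> vec \<Rightarrow> vec" where
  "act g P = (\<chi> j. P $ (inv g j))"

datatype part = NO1 | NO2 | NO3 | Marg | Corr | SI

lemma UNIV_part: "(UNIV :: part set) = {NO1, NO2, NO3, Marg, Corr, SI}"
  using part.exhaust by auto

instance part :: finite
  by standard (simp add: UNIV_part)

definition Vsub :: "part \<Rightarrow> vec set" where
  "Vsub p = (case p of
      NO1 \<Rightarrow> span {Q 1 1 1 1}
    | NO2 \<Rightarrow> span {Q 1 1 1 (-1), Q 1 1 (-1) 1}
    | NO3 \<Rightarrow> span {Q 1 1 (-1) (-1)}
    | Marg \<Rightarrow> span {Q (-1) 1 1 1, Q (-1) 1 (-1) 1, Q 1 (-1) 1 1, Q 1 (-1) 1 (-1)}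
    | Corr \<Rightarrow> span {Q (-1) (-1) 1 1, Q (-1) (-1) 1 (-1), Q (-1) (-1) (-1) 1, Q (-1) (-1) (-1) (-1)}
    | SI \<Rightarrow> span {Q 1 (-1) (-1) 1, Q 1 (-1) (-1) (-1), Q (-1) 1 1 (-1), Q (-1) 1 (-1) (-1)})"

definition G_invariant :: "vec set \<Rightarrow> bool" where
  "G_invariant W \<longleftrightarrow> (\<forall>g\<in>relabel. \<forall>v\<in>W. act g v \<in> W)"

definition G_irreducible :: "vec set \<Rightarrow> bool" where
  "G_irreducible W \<longleftrightarrow> subspace W \<and> G_invariant W \<and> W \<noteq> {0} \<and>
     (\<forall>U. subspace U \<and> U \<subseteq> W \<and> G_invariant U \<longrightarrow> U = {0} \<or> U = W)"

definition G_equivalent :: "vec set \<Rightarrow> vec set \<Rightarrow> bool" where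
  "G_equivalent W U \<longleftrightarrow> (\<exists>T. linear T \<and> bij_betw T W U \<and>
     (\<forall>g\<in>relabel. \<forall>v\<in>W. T (act g v) = act g (T v)))"

definition direct_sum_decomp :: "vec set set \<Rightarrow> bool" where
  "direct_sum_decomp \<W> \<longleftrightarrow> finite \<W> \<and> (\<forall>W\<in>\<W>. subspace W) \<and>
     (\<forall>v. \<exists>!c. c \<in> extensional \<W> \<and> (\<forall>W\<in>\<W>. c W \<in> W) \<and> v = (\<Sum>W\<in>\<W>. c W))"

definition component :: "part \<Rightarrow> vec \<Rightarrow> vec" where
  "component p P = (THE c. (\<forall>q. c q \<in> Vsub q) \<and> P = (\<Sum>q\<in>UNIV. c q)) p"

end

theory Submission
  imports Defs
begin

text \<open>The 16 vectors \<open>Q_{ijkl}\<close> are the characters of \<open>(\<int>/2)\<^sup>4\<close> and form an orthogonal basis of \<open>V\<close>.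
  Every relabeling maps each of them to \<open>\<plusminus>\<close> another one, and the relabelings that flip an
  outcome for both settings or flip a setting act diagonally on this basis, with \<open>\<plusminus>1\<close>
  eigenvalues that separate all 16 basis vectors. Averaging with such elements projects any
  vector of an invariant subspace onto each of its basis components, so every invariant subspace is
  spanned by the basis vectors it contains. The six subspaces are spanned by the six orbits of the
  induced permutation action on basis vectors, hence they are irreducible and are the only
  irreducible subspaces; an intertwiner must map a basis vector into its own joint eigenspace, which
  lies in a single one of the six subspaces, so no two of them are equivalent.\<close>

definition bsign :: "bool \<Rightarrow> real" where
  "bsign b = (if b then -1 else 1)"

definition Qpat :: "idx \<Rightarrow> vec" where
  "Qpat s = (case s of (i, j, k, l) \<Rightarrow> Q (bsign i) (bsign j) (bsign k) (bsign l))"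

lemma Qpat_nth:
  "Qpat (i, j, k, l) $ (a, b, x, y) = bsign (i \<and> a) * bsign (j \<and> b) * bsign (k \<and> x) * bsign (l \<and> y)"
  by (simp add: Qpat_def Q_def bsign_def)

lemma Qpat_nth_commute: "Qpat s $ t = Qpat t $ s"
  by (cases s rule: prod_cases4; cases t rule: prod_cases4) (simp add: Qpat_nth conj_commute)

lemma sum_UNIV_idx:
  "(\<Sum>t\<in>(UNIV::idx set). f t) = (\<Sum>a\<in>UNIV. \<Sum>b\<in>UNIV. \<Sum>x\<in>UNIV. \<Sum>y\<in>UNIV. f (a, b, x, y))"
  by (simp add: UNIV_Times_UNIV[symmetric] sum.cartesian_product del: UNIV_Times_UNIV)

lemma inner_Qpat: "Qpat s \<bullet> Qpat r = (if s = r then 16 else 0)"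
  by (cases s rule: prod_cases4; cases r rule: prod_cases4)
    (simp add: inner_vec_def sum_UNIV_idx Qpat_nth UNIV_bool bsign_def)

lemma Qpat_nonzero: "Qpat s \<noteq> 0"
  using inner_Qpat[of s s] by auto

lemma inner_sum_Qpat: "(\<Sum>r\<in>UNIV. c r *\<^sub>R Qpat r) \<bullet> Qpat s = 16 * c s"
proof -
  have "(\<Sum>r\<in>UNIV. c r *\<^sub>R Qpat r) \<bullet> Qpat s = (\<Sum>r\<in>UNIV. if r = s then 16 * c s else 0)"
    unfolding inner_sum_left by (rule sum.cong) (simp_all add: inner_Qpat)
  then show ?thesis by simp
qed

text \<open>Completeness of the basis follows from orthogonality of its columns, i.e.\ from the symmetry
  of the character table.\<close>
lemma inner_Qpat_columns: "Qpat r \<bullet> Qpat t = (\<Sum>s\<in>UNIV. Qpat s $ r * Qpat s $ t)"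
  unfolding inner_vec_def by (simp add: Qpat_nth_commute[of _ r] Qpat_nth_commute[of _ t])

lemma Qpat_expansion: "v = (\<Sum>s\<in>UNIV. (v \<bullet> Qpat s / 16) *\<^sub>R Qpat s)"
proof (subst vec_eq_iff, intro allI)
  fix t
  have "(\<Sum>s\<in>UNIV. (v \<bullet> Qpat s / 16) *\<^sub>R Qpat s) $ t
      = (\<Sum>s\<in>UNIV. \<Sum>r\<in>UNIV. v $ r * (Qpat s $ r * Qpat s $ t) / 16)"
    unfolding sum_component inner_vec_def
    by (rule sum.cong) (simp_all add: sum_distrib_left mult_ac)
  also have "\<dots> = (\<Sum>r\<in>UNIV. v $ r * (Qpat r \<bullet> Qpat t) / 16)"
    unfolding inner_Qpat_columns
    by (subst sum.swap) (simp add: sum_divide_distrib sum_distrib_left)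
  also have "\<dots> = (\<Sum>r\<in>UNIV. if r = t then v $ t else 0)"
    by (rule sum.cong) (simp_all add: inner_Qpat)
  also have "\<dots> = v $ t"
    by simp
  finally show "v $ t = (\<Sum>s\<in>UNIV. (v \<bullet> Qpat s / 16) *\<^sub>R Qpat s) $ t" by simp
qed

lemma eq_0_iff_inner_Qpat: "v = 0 \<longleftrightarrow> (\<forall>s. v \<bullet> Qpat s = 0)"
proof
  assume "\<forall>s. v \<bullet> Qpat s = 0"
  then have "\<And>s. v \<bullet> Qpat s = 0"
    by blast
  then have "(\<Sum>s\<in>UNIV. (v \<bullet> Qpat s / 16) *\<^sub>R Qpat s) = 0"
    by simp
  then show "v = 0"
    using Qpat_expansion[of v] by simp
qed simp

lemma Qpat_ext: "(\<And>s. x \<bullet> Qpat s = y \<bullet> Qpat s) \<Longrightarrow> x = y"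
  using eq_0_iff_inner_Qpat[of "x - y"] by (simp add: inner_diff_left)

lemma span_Qpat_eq: "span (Qpat ` A) = {v. \<forall>s. s \<notin> A \<longrightarrow> v \<bullet> Qpat s = 0}"
proof
  have "subspace {v. \<forall>s. s \<notin> A \<longrightarrow> v \<bullet> Qpat s = 0}"
    unfolding subspace_def by (simp add: inner_add_left del: split_paired_All)
  moreover have "Qpat ` A \<subseteq> {v. \<forall>s. s \<notin> A \<longrightarrow> v \<bullet> Qpat s = 0}"
    using inner_Qpat by (smt (verit) image_subset_iff mem_Collect_eq)
  ultimately show "span (Qpat ` A) \<subseteq> {v. \<forall>s. s \<notin> A \<longrightarrow> v \<bullet> Qpat s = 0}"
    by (rule span_minimal[rotated])
next
  show "{v. \<forall>s. s \<notin> A \<longrightarrow> v \<bullet> Qpat s = 0} \<subseteq> span (Qpat ` A)"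
  proof
    fix v assume v: "v \<in> {v. \<forall>s. s \<notin> A \<longrightarrow> v \<bullet> Qpat s = 0}"
    have "(v \<bullet> Qpat s / 16) *\<^sub>R Qpat s \<in> span (Qpat ` A)" for s
      using v by (cases "s \<in> A") (auto intro: span_scale span_base span_zero simp del: split_paired_All)
    then have "(\<Sum>s\<in>UNIV. (v \<bullet> Qpat s / 16) *\<^sub>R Qpat s) \<in> span (Qpat ` A)"
      by (intro span_sum)
    then show "v \<in> span (Qpat ` A)"
      using Qpat_expansion[of v] by simp
  qed
qed

definition part_of :: "idx \<Rightarrow> part" where
  "part_of s = (case s of (i, j, k, l) \<Rightarrow>
     if \<not> i \<and> \<not> j then (if \<not> k \<and> \<not> l then NO1 else if k \<and> l then NO3 else NO2)
     else if i \<and> j then Corr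
     else if i then (if l then SI else Marg)
     else (if k then SI else Marg))"

lemma part_of_eq_iff:
  "part_of s = NO1 \<longleftrightarrow> s \<in> {(False,False,False,False)}"
  "part_of s = NO2 \<longleftrightarrow> s \<in> {(False,False,False,True), (False,False,True,False)}"
  "part_of s = NO3 \<longleftrightarrow> s \<in> {(False,False,True,True)}"
  "part_of s = Marg \<longleftrightarrow>
     s \<in> {(True,False,False,False), (True,False,True,False), (False,True,False,False), (False,True,False,True)}"
  "part_of s = Corr \<longleftrightarrow>
     s \<in> {(True,True,False,False), (True,True,False,True), (True,True,True,False), (True,True,True,True)}"
  "part_of s = SI \<longleftrightarrow>
     s \<in> {(False,True,True,False), (False,True,True,True), (True,False,False,True), (True,False,True,True)}"
  by (cases s rule: prod_cases4; auto simp: part_of_def)+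

lemma part_of_surj: "\<exists>s. part_of s = p"
  by (cases p) (auto simp: part_of_eq_iff)

lemma Vsub_eq_span: "Vsub p = span (Qpat ` {s. part_of s = p})"
  by (cases p) (simp_all only: part_of_eq_iff Collect_mem_eq image_insert image_empty,
      simp_all add: Vsub_def Qpat_def bsign_def)

lemma Vsub_eq_orthogonal: "Vsub p = {v. \<forall>s. part_of s \<noteq> p \<longrightarrow> v \<bullet> Qpat s = 0}"
  unfolding Vsub_eq_span span_Qpat_eq by simp

lemma subspace_Vsub: "subspace (Vsub p)"
  unfolding Vsub_eq_span by simp

lemma Qpat_in_Vsub: "part_of s = p \<Longrightarrow> Qpat s \<in> Vsub p"
  unfolding Vsub_eq_span by (intro span_base) auto

lemma inner_Qpat_Vsub: "v \<in> Vsub p \<Longrightarrow> part_of s \<noteq> p \<Longrightarrow> v \<bullet> Qpat s = 0"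
  unfolding Vsub_eq_orthogonal by blast

lemma Vsub_neq_0: "Vsub p \<noteq> {0}"
  using part_of_surj[of p] Qpat_in_Vsub Qpat_nonzero by blast

lemma orthogonal_Vsub:
  assumes "p \<noteq> q" "u \<in> Vsub p" "w \<in> Vsub q"
  shows "orthogonal u w"
proof -
  have "u \<bullet> w = (\<Sum>s\<in>UNIV. (w \<bullet> Qpat s / 16) * (u \<bullet> Qpat s))"
    by (subst Qpat_expansion[of w]) (simp add: inner_sum_right)
  also have "\<dots> = 0"
  proof (rule sum.neutral, intro ballI)
    fix s
    show "(w \<bullet> Qpat s / 16) * (u \<bullet> Qpat s) = 0"
      using assms inner_Qpat_Vsub[OF assms(2), of s] inner_Qpat_Vsub[OF assms(3), of s]
      by (cases "part_of s = p") auto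
  qed
  finally show ?thesis unfolding orthogonal_def .
qed

definition proj :: "part \<Rightarrow> vec \<Rightarrow> vec" where
  "proj p v = (\<Sum>s\<in>UNIV. (if part_of s = p then v \<bullet> Qpat s / 16 else 0) *\<^sub>R Qpat s)"

lemma inner_proj_Qpat: "proj p v \<bullet> Qpat s = (if part_of s = p then v \<bullet> Qpat s else 0)"
  unfolding proj_def inner_sum_Qpat by simp

lemma proj_in_Vsub: "proj p v \<in> Vsub p"
  unfolding Vsub_eq_orthogonal by (simp add: inner_proj_Qpat del: split_paired_All)

lemma sum_proj: "(\<Sum>p\<in>UNIV. proj p v) = v"
  by (rule Qpat_ext) (simp add: inner_sum_left inner_proj_Qpat)

lemma decomposition_eq_proj:
  assumes c: "\<forall>q. c q \<in> Vsub q" and P: "P = (\<Sum>q\<in>UNIV. c q)"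
  shows "c p = proj p P"
proof (rule Qpat_ext)
  fix s
  have "c q \<bullet> Qpat s = 0" if "q \<noteq> part_of s" for q
    using c inner_Qpat_Vsub that by metis
  then have "P \<bullet> Qpat s = c (part_of s) \<bullet> Qpat s"
    unfolding P inner_sum_left by (subst sum.remove[of _ "part_of s"]) auto
  then show "c p \<bullet> Qpat s = proj p P \<bullet> Qpat s"
    using \<open>\<And>q. q \<noteq> part_of s \<Longrightarrow> c q \<bullet> Qpat s = 0\<close> by (auto simp: inner_proj_Qpat)
qed

lemma ex1_decomposition: "\<exists>!c. (\<forall>p. c p \<in> Vsub p) \<and> P = (\<Sum>p\<in>UNIV. c p)"
  using proj_in_Vsub sum_proj decomposition_eq_proj
  by (intro ex1I[of _ "\<lambda>p. proj p P"]) auto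

lemma component_eq_proj: "component p P = proj p P"
proof -
  have "(THE c. (\<forall>q. c q \<in> Vsub q) \<and> P = (\<Sum>q\<in>UNIV. c q)) = (\<lambda>q. proj q P)"
    by (rule the1_equality[OF ex1_decomposition]) (simp add: proj_in_Vsub sum_proj)
  then show ?thesis unfolding component_def by simp
qed

lemma inv_involution: "f \<circ> f = id \<Longrightarrow> inv f = f"
  by (metis inv_unique_comp)

lemma generators_involution:
  "flipA x0 \<circ> flipA x0 = id" "flipB y0 \<circ> flipB y0 = id" "flipX \<circ> flipX = id"
  "flipY \<circ> flipY = id" "swapAB \<circ> swapAB = id"
  by (auto simp: fun_eq_iff flipA_def flipB_def flipX_def flipY_def swapAB_def)

lemma inv_generators:
  "inv (flipA x0) = flipA x0" "inv (flipB y0) = flipB y0" "inv flipX = flipX"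
  "inv flipY = flipY" "inv swapAB = swapAB"
  by (simp_all add: inv_involution generators_involution)

lemma bij_generator: "h \<in> generators \<Longrightarrow> bij h"
  unfolding generators_def using generators_involution by (auto intro: o_bij)

lemma bij_relabel: "g \<in> relabel \<Longrightarrow> bij g"
  by (induction rule: relabel.induct) (use bij_comp bij_generator in blast)+

lemma generator_in_relabel: "h \<in> generators \<Longrightarrow> h \<in> relabel"
  using relabel_step[OF relabel_id] by (metis comp_id)

lemma act_nth: "act g P $ j = P $ inv g j"
  by (simp add: act_def)

lemma linear_act: "linear (act g)"
  by (rule linearI) (simp_all add: vec_eq_iff act_nth)

lemma act_id: "act id v = v"
  by (simp add: vec_eq_iff act_nth)

lemma act_comp: "bij g \<Longrightarrow> bij h \<Longrightarrow> act (h \<circ> g) P = act h (act g P)"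
  by (simp add: vec_eq_iff act_nth o_inv_distrib)

lemma act_Qpat_generators:
  "act (flipA True) (Qpat (i, j, k, l)) = Qpat (i, j, i \<noteq> k, l)"
  "act (flipA False) (Qpat (i, j, k, l)) = bsign i *\<^sub>R Qpat (i, j, i \<noteq> k, l)"
  "act (flipB True) (Qpat (i, j, k, l)) = Qpat (i, j, k, j \<noteq> l)"
  "act (flipB False) (Qpat (i, j, k, l)) = bsign j *\<^sub>R Qpat (i, j, k, j \<noteq> l)"
  "act flipX (Qpat (i, j, k, l)) = bsign k *\<^sub>R Qpat (i, j, k, l)"
  "act flipY (Qpat (i, j, k, l)) = bsign l *\<^sub>R Qpat (i, j, k, l)"
  "act swapAB (Qpat (i, j, k, l)) = Qpat (j, i, l, k)"
  unfolding vec_eq_iff act_nth inv_generators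
  by (simp_all add: flipA_def flipB_def flipX_def flipY_def swapAB_def Qpat_nth bsign_def mult_ac
      split: prod.split)

lemma part_of_generator_moves:
  "part_of (i, j, i \<noteq> k, l) = part_of (i, j, k, l)"
  "part_of (i, j, k, j \<noteq> l) = part_of (i, j, k, l)"
  "part_of (j, i, l, k) = part_of (i, j, k, l)"
  by (cases i; cases j; cases k; cases l; simp add: part_of_def)+

lemma act_generator_Qpat_in_Vsub:
  assumes "h \<in> generators"
  shows "act h (Qpat s) \<in> Vsub (part_of s)"
proof -
  obtain i j k l where s: "s = (i, j, k, l)" by (cases s rule: prod_cases4)
  have "Qpat s' \<in> Vsub (part_of s)" "c *\<^sub>R Qpat s' \<in> Vsub (part_of s)" if "part_of s' = part_of s" for c s'
    using that Qpat_in_Vsub subspace_scale[OF subspace_Vsub] by blast+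
  with assms show ?thesis
    unfolding generators_def s
    by (elim insertE emptyE) (simp_all only: act_Qpat_generators part_of_generator_moves)
qed

lemma act_generator_Vsub:
  assumes "h \<in> generators" "v \<in> Vsub p"
  shows "act h v \<in> Vsub p"
proof -
  have "act h ` Qpat ` {s. part_of s = p} \<subseteq> Vsub p"
    using act_generator_Qpat_in_Vsub[OF assms(1)] by blast
  then have "span (act h ` Qpat ` {s. part_of s = p}) \<subseteq> Vsub p"
    unfolding Vsub_eq_span by (rule span_minimal) simp
  then show ?thesis
    using assms(2) unfolding Vsub_eq_span span_linear_image[OF linear_act] by blast
qed

lemma G_invariant_Vsub: "G_invariant (Vsub p)"
  unfolding G_invariant_def
proof (intro ballI)
  fix g v assume "g \<in> relabel" "v \<in> Vsub p"
  then show "act g v \<in> Vsub p"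
  proof (induction g rule: relabel.induct)
    case relabel_id
    then show ?case using act_id by (simp add: id_def)
  next
    case (relabel_step g s)
    then show ?case by (metis act_comp bij_relabel bij_generator act_generator_Vsub)
  qed
qed

text \<open>The classes \<open>part_of\<close> are exactly the orbits of the three permutations of sign patterns
  induced by \<open>flipA True\<close>, \<open>flipB True\<close> and \<open>swapAB\<close>.\<close>
lemma same_part_induct:
  assumes moveA: "\<And>i j k l. R (i, j, k, l) \<Longrightarrow> R (i, j, i \<noteq> k, l)"
    and moveB: "\<And>i j k l. R (i, j, k, l) \<Longrightarrow> R (i, j, k, j \<noteq> l)"
    and swap: "\<And>i j k l. R (i, j, k, l) \<Longrightarrow> R (j, i, l, k)"
    and "R s0" "part_of s = part_of s0"
  shows "R s"
proof -
  obtain a b c d where s0: "s0 = (a, b, c, d)" by (cases s0 rule: prod_cases4)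
  obtain a' b' c' d' where s: "s = (a', b', c', d')" by (cases s rule: prod_cases4)
  have 0: "R (a, b, c, d)"
    using \<open>R s0\<close> s0 by simp
  have 1: "R (a, b, a \<noteq> c, d)" "R (a, b, c, b \<noteq> d)" "R (b, a, d, c)"
    using moveA[OF 0] moveB[OF 0] swap[OF 0] .
  have 2: "R (a, b, a \<noteq> c, b \<noteq> d)" "R (b, a, b \<noteq> d, c)" "R (b, a, d, a \<noteq> c)"
    using moveB[OF 1(1)] swap[OF 1(2)] swap[OF 1(1)] .
  show ?thesis
    using \<open>part_of s = part_of s0\<close> 0 1 2 unfolding s s0
    by (cases a; cases b; cases c; cases d; cases a'; cases b'; cases c'; cases d'; simp add: part_of_def)
qed

definition acts_diagonally :: "(idx \<Rightarrow> idx) \<Rightarrow> (idx \<Rightarrow> bool) \<Rightarrow> bool" where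
  "acts_diagonally g c \<longleftrightarrow> (\<forall>r. act g (Qpat r) = bsign (c r) *\<^sub>R Qpat r)"

lemma inner_act_diagonal:
  assumes "acts_diagonally g c"
  shows "act g w \<bullet> Qpat s = bsign (c s) * (w \<bullet> Qpat s)"
proof -
  have "\<And>r. act g (Qpat r) = bsign (c r) *\<^sub>R Qpat r"
    using assms unfolding acts_diagonally_def by blast
  then have "act g w = (\<Sum>r\<in>UNIV. ((w \<bullet> Qpat r / 16) * bsign (c r)) *\<^sub>R Qpat r)"
    by (subst Qpat_expansion[of w]) (simp add: linear_sum[OF linear_act] linear_scale[OF linear_act])
  then show ?thesis
    by (simp add: inner_sum_Qpat)
qed

definition flipA_both :: "idx \<Rightarrow> idx" where
  "flipA_both = flipA False \<circ> flipA True"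

definition flipB_both :: "idx \<Rightarrow> idx" where
  "flipB_both = flipB False \<circ> flipB True"

lemma diagonal_elements_in_relabel:
  "flipA_both \<in> relabel" "flipB_both \<in> relabel" "flipX \<in> relabel" "flipY \<in> relabel"
  unfolding flipA_both_def flipB_both_def
  by (intro relabel_step generator_in_relabel; simp add: generators_def)+

lemma acts_diagonally_diagonal_elements:
  "acts_diagonally flipA_both (\<lambda>(i, j, k, l). i)"
  "acts_diagonally flipB_both (\<lambda>(i, j, k, l). j)"
  "acts_diagonally flipX (\<lambda>(i, j, k, l). k)"
  "acts_diagonally flipY (\<lambda>(i, j, k, l). l)"
  unfolding acts_diagonally_def flipA_both_def flipB_both_def
  by (auto simp: act_comp bij_generator generators_def act_Qpat_generators bsign_def)

lemma separating_diagonal_element: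
  assumes "s \<noteq> s0"
  obtains g c where "g \<in> relabel" "acts_diagonally g c" "c s \<noteq> c s0"
proof -
  obtain a b c d where s: "s = (a, b, c, d)" by (cases s rule: prod_cases4)
  obtain a0 b0 c0 d0 where s0: "s0 = (a0, b0, c0, d0)" by (cases s0 rule: prod_cases4)
  from assms consider "a \<noteq> a0" | "b \<noteq> b0" | "c \<noteq> c0" | "d \<noteq> d0"
    unfolding s s0 by auto
  then show ?thesis
    using that[OF diagonal_elements_in_relabel(1) acts_diagonally_diagonal_elements(1)]
      that[OF diagonal_elements_in_relabel(2) acts_diagonally_diagonal_elements(2)]
      that[OF diagonal_elements_in_relabel(3) acts_diagonally_diagonal_elements(3)]
      that[OF diagonal_elements_in_relabel(4) acts_diagonally_diagonal_elements(4)]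
    unfolding s s0 by cases simp_all
qed

text \<open>Averaging \<open>u\<close> with \<open>\<plusminus>g u\<close> keeps the basis components of \<open>u\<close> on one eigenspace of \<open>g\<close>
  and kills the others.\<close>
lemma diagonal_filter:
  assumes U: "subspace U" "G_invariant U" and "u \<in> U" "g \<in> relabel" and g: "acts_diagonally g c"
  obtains u' where "u' \<in> U" "\<And>s. u' \<bullet> Qpat s = (if c s = b then u \<bullet> Qpat s else 0)"
proof
  have "act g u \<in> U"
    using assms unfolding G_invariant_def by blast
  then show "(1/2) *\<^sub>R (u + bsign b *\<^sub>R act g u) \<in> U"
    using U \<open>u \<in> U\<close> by (intro subspace_scale subspace_add) auto
  fix s
  show "((1/2) *\<^sub>R (u + bsign b *\<^sub>R act g u)) \<bullet> Qpat s = (if c s = b then u \<bullet> Qpat s else 0)"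
    by (cases b; cases "c s") (simp_all add: inner_add_left inner_diff_left inner_act_diagonal[OF g] bsign_def)
qed

lemma invariant_subspace_isolate_component:
  assumes U: "subspace U" "G_invariant U" and "u \<in> U" "s0 \<notin> S"
  obtains u' where "u' \<in> U" "u' \<bullet> Qpat s0 = u \<bullet> Qpat s0" "\<And>s. s \<in> S \<Longrightarrow> u' \<bullet> Qpat s = 0"
proof -
  have "finite S" by simp
  then have "\<exists>u'\<in>U. u' \<bullet> Qpat s0 = u \<bullet> Qpat s0 \<and> (\<forall>s\<in>S. u' \<bullet> Qpat s = 0)"
    using \<open>s0 \<notin> S\<close>
  proof (induction S rule: finite_induct)
    case empty
    then show ?case using \<open>u \<in> U\<close> by blast
  next
    case (insert s S)
    then obtain u' where u': "u' \<in> U" "u' \<bullet> Qpat s0 = u \<bullet> Qpat s0" "\<forall>t\<in>S. u' \<bullet> Qpat t = 0"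
      by blast
    obtain g c where g: "g \<in> relabel" "acts_diagonally g c" "c s \<noteq> c s0"
      using separating_diagonal_element[of s s0] insert.prems by blast
    obtain u'' where u'': "u'' \<in> U" "\<And>t. u'' \<bullet> Qpat t = (if c t = c s0 then u' \<bullet> Qpat t else 0)"
      using diagonal_filter[OF U u'(1) g(1,2)] by blast
    have "u'' \<bullet> Qpat s0 = u \<bullet> Qpat s0"
      using u''(2)[of s0] u'(2) by simp
    moreover have "u'' \<bullet> Qpat t = 0" if "t \<in> insert s S" for t
      using u''(2)[of t] u'(3) g(3) that by auto
    ultimately show ?case
      using u''(1) by blast
  qed
  then show ?thesis
    using that by blast
qed

lemma Qpat_in_invariant_subspace:
  assumes U: "subspace U" "G_invariant U" and "u \<in> U" "u \<bullet> Qpat s0 \<noteq> 0"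
  shows "Qpat s0 \<in> U"
proof -
  obtain u' where u': "u' \<in> U" "u' \<bullet> Qpat s0 = u \<bullet> Qpat s0" "\<And>s. s \<noteq> s0 \<Longrightarrow> u' \<bullet> Qpat s = 0"
    using invariant_subspace_isolate_component[OF U \<open>u \<in> U\<close>, of s0 "- {s0}"] by auto
  have "u' = (u \<bullet> Qpat s0 / 16) *\<^sub>R Qpat s0"
    by (rule Qpat_ext) (use u' in \<open>auto simp: inner_Qpat\<close>)
  then have "Qpat s0 = (16 / (u \<bullet> Qpat s0)) *\<^sub>R u'"
    using \<open>u \<bullet> Qpat s0 \<noteq> 0\<close> by simp
  then show ?thesis
    using U u'(1) by (metis subspace_scale)
qed

lemma Vsub_subset_invariant_subspace:
  assumes U: "subspace U" "G_invariant U" and "u \<in> U" "u \<bullet> Qpat s0 \<noteq> 0"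
  shows "Vsub (part_of s0) \<subseteq> U"
proof -
  have moves: "flipA True \<in> relabel" "flipB True \<in> relabel" "swapAB \<in> relabel"
    by (intro generator_in_relabel; simp add: generators_def)+
  have closed: "Qpat (i, j, i \<noteq> k, l) \<in> U" "Qpat (i, j, k, j \<noteq> l) \<in> U" "Qpat (j, i, l, k) \<in> U"
    if "Qpat (i, j, k, l) \<in> U" for i j k l
    using U(2) moves that unfolding G_invariant_def
    by (metis act_Qpat_generators(1), metis act_Qpat_generators(3), metis act_Qpat_generators(7))
  have "Qpat s \<in> U" if "part_of s = part_of s0" for s
    using same_part_induct[where R = "\<lambda>s. Qpat s \<in> U"] closed
      Qpat_in_invariant_subspace[OF assms] that by blast
  then show ?thesis
    unfolding Vsub_eq_span by (intro span_minimal[OF _ U(1)]) auto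
qed

lemma G_irreducible_Vsub: "G_irreducible (Vsub p)"
  unfolding G_irreducible_def
proof (intro conjI allI impI subspace_Vsub G_invariant_Vsub Vsub_neq_0)
  fix U assume U: "subspace U \<and> U \<subseteq> Vsub p \<and> G_invariant U"
  show "U = {0} \<or> U = Vsub p"
  proof (cases "U = {0}")
    case False
    then obtain u where u: "u \<in> U" "u \<noteq> 0"
      using U subspace_0 by blast
    then obtain s where s: "u \<bullet> Qpat s \<noteq> 0"
      using eq_0_iff_inner_Qpat by blast
    then have "part_of s = p"
      using inner_Qpat_Vsub U u by blast
    then have "Vsub p \<subseteq> U"
      using Vsub_subset_invariant_subspace U u s by blast
    then show ?thesis
      using U by blast
  qed simp
qed

lemma G_irreducible_imp_Vsub:
  assumes "G_irreducible W"
  obtains p where "W = Vsub p"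
proof -
  have W: "subspace W" "G_invariant W" "W \<noteq> {0}"
    and minimal: "\<And>U. subspace U \<and> U \<subseteq> W \<and> G_invariant U \<Longrightarrow> U = {0} \<or> U = W"
    using assms unfolding G_irreducible_def by blast+
  obtain u where "u \<in> W" "u \<noteq> 0"
    using W subspace_0 by blast
  then obtain s where "u \<bullet> Qpat s \<noteq> 0"
    using eq_0_iff_inner_Qpat by blast
  then have "Vsub (part_of s) \<subseteq> W"
    using Vsub_subset_invariant_subspace W(1,2) \<open>u \<in> W\<close> by blast
  then show ?thesis
    using minimal[of "Vsub (part_of s)"] subspace_Vsub G_invariant_Vsub Vsub_neq_0 that by blast
qed

lemma direct_sum_decomp_irreducible_eq_range_Vsub:
  assumes D: "direct_sum_decomp \<W>" and irreducible: "\<forall>W\<in>\<W>. G_irreducible W"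
  shows "\<W> = range Vsub"
proof
  show "\<W> \<subseteq> range Vsub"
  proof
    fix W assume "W \<in> \<W>"
    then obtain p where "W = Vsub p"
      using irreducible by (meson G_irreducible_imp_Vsub)
    then show "W \<in> range Vsub" by simp
  qed
next
  show "range Vsub \<subseteq> \<W>"
  proof (rule ccontr)
    assume "\<not> range Vsub \<subseteq> \<W>"
    then obtain p where p: "Vsub p \<notin> \<W>" by blast
    obtain s where s: "part_of s = p"
      using part_of_surj by blast
    obtain c where c: "\<forall>W\<in>\<W>. c W \<in> W" "Qpat s = (\<Sum>W\<in>\<W>. c W)"
      using D unfolding direct_sum_decomp_def by blast
    have "c W \<bullet> Qpat s = 0" if W: "W \<in> \<W>" for W
    proof -
      obtain q where q: "W = Vsub q"
        using irreducible W by (meson G_irreducible_imp_Vsub)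
      then have "q \<noteq> part_of s"
        using p s W by blast
      then show ?thesis
        using inner_Qpat_Vsub[of "c W" q s] c(1) q W by blast
    qed
    moreover have "Qpat s \<bullet> Qpat s = (\<Sum>W\<in>\<W>. c W \<bullet> Qpat s)"
      using c(2) inner_sum_left by metis
    ultimately have "Qpat s \<bullet> Qpat s = 0"
      by simp
    then show False
      by (simp add: inner_Qpat)
  qed
qed

lemma orthogonal_common_eigenvector:
  assumes "\<And>g c. g \<in> relabel \<Longrightarrow> acts_diagonally g c \<Longrightarrow> act g w = bsign (c s0) *\<^sub>R w"
    and "s \<noteq> s0"
  shows "w \<bullet> Qpat s = 0"
proof -
  obtain g c where g: "g \<in> relabel" "acts_diagonally g c" "c s \<noteq> c s0"
    using separating_diagonal_element[OF \<open>s \<noteq> s0\<close>] by blast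
  have "act g w \<bullet> Qpat s = bsign (c s0) * (w \<bullet> Qpat s)"
    using assms(1)[OF g(1,2)] by simp
  then have "bsign (c s) * (w \<bullet> Qpat s) = bsign (c s0) * (w \<bullet> Qpat s)"
    by (metis inner_act_diagonal[OF g(2)])
  then show ?thesis
    using g(3) by (cases "c s"; cases "c s0") (simp_all add: bsign_def)
qed

lemma not_G_equivalent_Vsub:
  assumes "p \<noteq> q"
  shows "\<not> G_equivalent (Vsub p) (Vsub q)"
proof
  assume "G_equivalent (Vsub p) (Vsub q)"
  then obtain T where T: "linear T" "bij_betw T (Vsub p) (Vsub q)"
    and intertwines: "\<And>g v. g \<in> relabel \<Longrightarrow> v \<in> Vsub p \<Longrightarrow> T (act g v) = act g (T v)"
    unfolding G_equivalent_def by blast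
  obtain s0 where s0: "part_of s0 = p"
    using part_of_surj by blast
  have Qs0: "Qpat s0 \<in> Vsub p"
    using Qpat_in_Vsub[OF s0] .
  have "T (Qpat s0) \<noteq> 0"
  proof
    assume "T (Qpat s0) = 0"
    then have "T (Qpat s0) = T 0"
      using linear_0[OF T(1)] by simp
    then have "Qpat s0 = 0"
      using T(2) Qs0 subspace_0[OF subspace_Vsub] unfolding bij_betw_def inj_on_def by blast
    then show False
      using Qpat_nonzero by blast
  qed
  moreover have "T (Qpat s0) \<bullet> Qpat s = 0" for s
  proof (cases "s = s0")
    case True
    have "T (Qpat s0) \<in> Vsub q"
      using T(2) Qs0 unfolding bij_betw_def by blast
    then show ?thesis
      using inner_Qpat_Vsub s0 assms True by blast
  next
    case False
    have "act g (T (Qpat s0)) = bsign (c s0) *\<^sub>R T (Qpat s0)"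
      if "g \<in> relabel" "acts_diagonally g c" for g c
    proof -
      have "act g (T (Qpat s0)) = T (act g (Qpat s0))"
        using intertwines[OF \<open>g \<in> relabel\<close> Qs0] by simp
      also have "\<dots> = T (bsign (c s0) *\<^sub>R Qpat s0)"
        using \<open>acts_diagonally g c\<close> unfolding acts_diagonally_def by (simp del: split_paired_All)
      finally show ?thesis
        using linear_scale[OF T(1)] by simp
    qed
    then show ?thesis
      using orthogonal_common_eigenvector False by blast
  qed
  ultimately show False
    using eq_0_iff_inner_Qpat by blast
qed

lemma component_act:
  assumes "g \<in> relabel"
  shows "component p (act g P) = act g (component p P)"
proof -
  have "act g (proj p P) = proj p (act g P)"
  proof (rule decomposition_eq_proj)
    show "\<forall>q. act g (proj q P) \<in> Vsub q"
      using G_invariant_Vsub assms proj_in_Vsub unfolding G_invariant_def by blast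
    show "act g P = (\<Sum>q\<in>UNIV. act g (proj q P))"
      by (simp add: linear_sum[OF linear_act, symmetric] sum_proj)
  qed
  then show ?thesis
    by (simp add: component_eq_proj)
qed

theorem mainTheorem2:
  shows "(\<forall>P::vec. \<exists>!c. (\<forall>p. c p \<in> Vsub p) \<and> P = (\<Sum>p\<in>UNIV. c p))
    \<and> (\<forall>p q. p \<noteq> q \<longrightarrow> (\<forall>u\<in>Vsub p. \<forall>w\<in>Vsub q. orthogonal u w))
    \<and> (\<forall>p. G_invariant (Vsub p) \<and> G_irreducible (Vsub p))
    \<and> (\<forall>p q. p \<noteq> q \<longrightarrow> \<not> G_equivalent (Vsub p) (Vsub q))
    \<and> (\<forall>\<W>. direct_sum_decomp \<W> \<and> (\<forall>W\<in>\<W>. G_irreducible W) \<longrightarrow> \<W> = range Vsub)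
    \<and> (\<forall>g\<in>relabel. \<forall>P p. component p (act g P) = act g (component p P))"
  using ex1_decomposition orthogonal_Vsub G_invariant_Vsub G_irreducible_Vsub not_G_equivalent_Vsub
    direct_sum_decomp_irreducible_eq_range_Vsub component_act
  by blast

end
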